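(* Let $w\ge 1$. (a) Every permutation $\pi\in S_n$ of bandwidth $w$ (i.e. $|\pi_i-i|\le w$ for all $i$) is a product of at most $2w-1$ permutations of bandwidth $1$. (b) The bound $2w-1$ is sharp: for every $n\ge 2w$, the permutation $\sigma\in S_n$ given by $\sigma=(w+1)(w+2)\cdots(2w)\,1\,2\cdots w\,(2w+1)(2w+2)\cdots n$ in one-line notation (i.e. $\sigma_i=w+i$ for $1\le i\le w$, $\sigma_i=i-w$ for $w<i\le 2w$, $\sigma_i=i$ for $i>2w$) has bandwidth $w$ and cannot be written as a product of fewer than $2w-1$ permutations of bandwidth $1$.
   Context: A permutation $\rho\in S_n$ has bandwidth $w$ if $|\rho_i-i|\le w$ for all $i$, where $\rho_i=\rho(i)$. *)

theory Defs
  imports "HOL-Combinatorics.Permutations"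
begin

definition has_bandwidth :: "nat \<Rightarrow> nat \<Rightarrow> (nat \<Rightarrow> nat) \<Rightarrow> bool" where
  "has_bandwidth n w p \<longleftrightarrow> p permutes {1..n} \<and>
     (\<forall>i\<in>{1..n}. \<bar>int (p i) - int i\<bar> \<le> int w)"

definition prod_bw1_atmost :: "nat \<Rightarrow> nat \<Rightarrow> (nat \<Rightarrow> nat) \<Rightarrow> bool" where
  "prod_bw1_atmost n k p \<longleftrightarrow>
     (\<exists>ps. length ps \<le> k \<and> (\<forall>q\<in>set ps. has_bandwidth n 1 q) \<and> p = foldr (\<circ>) ps id)"

definition sigma_w :: "nat \<Rightarrow> nat \<Rightarrow> nat" where
  "sigma_w w i = (if 1 \<le> i \<and> i \<le> w then w + i
                  else if w < i \<and> i \<le> 2 * w then i - w else i)"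

end

theory Submission
  imports Defs
begin

(* A bandwidth-1 permutation is a product of disjoint adjacent transpositions, so a
   product of T of them is T rounds of a network of adjacent comparators. We run a variant of
   odd-even transposition sort on p (locale exchange_rounds): recording the exchanges of each round
   writes p as a product of T bandwidth-1 permutations once the arrangement is sorted, and we show
   that T = 2w - 1 rounds suffice. By the 0-1 principle it is enough to follow, for each threshold
   c, the positions holding values > c; they behave like particles moving right, and an amortised
   count (locale zero_one_trace) shows that the k-th of them advances in every round until it
   arrives. Plain odd-even sort fails on "full blocks" (windows exchanged as in sigma_w) of the
   wrong parity; there the network adopts the parity of the block and switches off the two
   comparators at the block boundary (locale bandwidth_perm).

   In a factorisation of sigma_w into L bandwidth-1
   factors count the inversions between the blocks {1..w} and {w+1..2w} after the first t factors.
   They grow from 0 to w^2, but factor t adds at most min (t + 1) (L - t), forcing L >= 2w - 1. *)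

definition swap_adjacent :: "(nat \<Rightarrow> bool) \<Rightarrow> nat \<Rightarrow> nat" where
  "swap_adjacent F j = (if 1 \<le> j \<and> F (j - 1) then j - 1 else if F j then Suc j else j)"

lemma swap_adjacent_involution:
  assumes "\<And>i. F i \<Longrightarrow> \<not> F (Suc i)" and "\<And>i. F i \<Longrightarrow> 1 \<le> i"
  shows "swap_adjacent F (swap_adjacent F j) = j"
  using assms[of "j - 1"] assms[of j] assms(1)[of "j - 2"]
  unfolding swap_adjacent_def by (cases j; cases "j - 1"; auto)

lemma swap_adjacent_bandwidth_1:
  assumes disj: "\<And>i. F i \<Longrightarrow> \<not> F (Suc i)" and range: "\<And>i. F i \<Longrightarrow> 1 \<le> i \<and> i < n"
  shows "has_bandwidth n 1 (swap_adjacent F)"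
proof -
  have inv: "swap_adjacent F (swap_adjacent F j) = j" for j
    by (rule swap_adjacent_involution) (use disj range in auto)
  have "swap_adjacent F permutes {1..n}"
  proof (rule inj_imp_permutes)
    show "inj_on (swap_adjacent F) {1..n}" by (metis inj_onI inv)
    show "swap_adjacent F x \<in> {1..n}" if "x \<in> {1..n}" for x
      using that range[of x] range[of "x - 1"] unfolding swap_adjacent_def by auto
    show "swap_adjacent F x = x" if "x \<notin> {1..n}" for x
      using that range[of x] range[of "x - 1"] unfolding swap_adjacent_def by auto
  qed simp
  moreover have "\<bar>int (swap_adjacent F i) - int i\<bar> \<le> 1" for i
    unfolding swap_adjacent_def by auto
  ultimately show ?thesis unfolding has_bandwidth_def by auto
qed

definition ones_in :: "(int \<Rightarrow> bool) \<Rightarrow> int \<Rightarrow> int \<Rightarrow> int" where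
  "ones_in b y R = (\<Sum>j\<in>{y..R}. if b j then 1 else 0)"

lemma ones_in_split: "y \<le> R \<Longrightarrow> ones_in b y R = (if b y then 1 else 0) + ones_in b (y + 1) R"
proof -
  assume "y \<le> R"
  then have "{y..R} = insert y {y + 1..R}" by auto
  then show ?thesis unfolding ones_in_def by simp
qed

lemma ones_in_nonneg: "0 \<le> ones_in b y R"
  unfolding ones_in_def by (rule sum_nonneg) auto

lemma ones_in_antimono: "y \<le> y' \<Longrightarrow> ones_in b y' R \<le> ones_in b y R"
  unfolding ones_in_def by (rule sum_mono2) auto

lemma ones_in_pos: "y \<le> j \<Longrightarrow> j \<le> R \<Longrightarrow> b j \<Longrightarrow> 1 \<le> ones_in b y R"
proof -
  assume j: "y \<le> j" "j \<le> R" "b j"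
  have "(if b j then 1 else 0) \<le> (\<Sum>j\<in>{y..R}. if b j then 1 else (0::int))"
    by (rule member_le_sum) (use j in auto)
  then show ?thesis unfolding ones_in_def using j by simp
qed

lemma ones_in_full:
  assumes full: "int K \<le> ones_in b (R + 1 - int K) R" and j: "R + 1 - int K \<le> j" "j \<le> R"
  shows "b j"
proof (rule ccontr)
  assume nb: "\<not> b j"
  let ?A = "{R + 1 - int K..R}"
  have "ones_in b (R + 1 - int K) R = (\<Sum>i\<in>?A - {j}. if b i then 1 else 0)"
    unfolding ones_in_def using j nb by (subst sum.remove[of _ j]) auto
  also have "\<dots> \<le> (\<Sum>i\<in>?A - {j}. 1)" by (rule sum_mono) auto
  also have "\<dots> = int K - 1" using j by simp
  finally show False using full by simp
qed

lemma zero_ahead: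
  assumes rest: "ones_in b (x + 1) R = int k - 1" and x: "x + 1 \<le> R" and k: "1 \<le> k"
    and ahead: "2 \<le> k \<Longrightarrow> x + 2 \<le> y" "2 \<le> k \<Longrightarrow> int (k - 1) \<le> ones_in b y R"
  shows "\<not> b (x + 1)"
proof
  assume one: "b (x + 1)"
  have after: "ones_in b (x + 1) R = 1 + ones_in b (x + 2) R"
    using ones_in_split[of "x + 1" R b] x one by (simp add: add.assoc)
  show False
  proof (cases "k = 1")
    case True
    then show False using rest after ones_in_nonneg[of b "x + 2" R] by simp
  next
    case False
    with k have k2: "2 \<le> k" by simp
    have "ones_in b y R \<le> ones_in b (x + 2) R" by (rule ones_in_antimono[OF ahead(1)[OF k2]])
    then show False using ahead(2)[OF k2] rest after k2 by simp
  qed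
qed

lemma sum_telescope_int:
  fixes e :: "int \<Rightarrow> int"
  shows "(\<Sum>j\<in>{y..y - 1 + int m}. e (j - 1) - e j) = e (y - 1) - e (y - 1 + int m)"
proof (induction m)
  case (Suc m)
  have "{y..y - 1 + int (Suc m)} = insert (y + int m) {y..y - 1 + int m}" by auto
  then show ?case using Suc by (simp add: algebra_simps)
qed simp

(* This is what any threshold view of the
   sorting network below looks like (0-1 principle). *)
locale zero_one_trace =
  fixes b :: "nat \<Rightarrow> int \<Rightarrow> bool" and F :: "nat \<Rightarrow> int \<Rightarrow> bool" and R \<phi> :: int
  assumes disjoint: "\<And>t i. F t i \<Longrightarrow> \<not> F t (i + 1)"
    and exchange: "\<And>t j. b (Suc t) j =
      (if F t (j - 1) then b t (j - 1) else if F t j then b t (j + 1) else b t j)"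
    and no_left_move: "\<And>t i. F t i \<Longrightarrow> b t (i + 1) \<Longrightarrow> b t i"
    and eager: "\<And>t i. even (i + int t + \<phi>) \<Longrightarrow> b t i \<Longrightarrow> \<not> b t (i + 1) \<Longrightarrow> F t i"
    and ones_right_0: "\<And>j. R < j \<Longrightarrow> b 0 j"
begin

lemma ones_right: "R < j \<Longrightarrow> b t j"
proof (induction t arbitrary: j)
  case (Suc t)
  then have "b t (j + 1)" "b t j" by simp_all
  then show ?case using disjoint[of t "j - 1"] no_left_move[of t "j - 1"]
    unfolding exchange[of t j] by auto
qed (rule ones_right_0)

definition crossing :: "nat \<Rightarrow> int \<Rightarrow> int" where
  "crossing t i = (if F t i \<and> b t i \<and> \<not> b t (i + 1) then 1 else 0)"

lemma crossing_nonneg: "0 \<le> crossing t i"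
  unfolding crossing_def by simp

lemma indicator_step:
  "(if b (Suc t) j then 1 else 0) = (if b t j then 1 else 0) + (crossing t (j - 1) - crossing t j)"
  using disjoint[of t "j - 1"] no_left_move[of t "j - 1"] no_left_move[of t j]
  unfolding exchange[of t j] crossing_def by (auto split: if_splits)

lemma ones_in_step:
  assumes "y \<le> R + 1"
  shows "ones_in (b (Suc t)) y R = ones_in (b t) y R + crossing t (y - 1)"
proof -
  define m where "m = nat (R - y + 1)"
  have R: "R = y - 1 + int m" using assms unfolding m_def by simp
  have "ones_in (b (Suc t)) y R
      = ones_in (b t) y R + (\<Sum>j\<in>{y..R}. crossing t (j - 1) - crossing t j)"
    unfolding ones_in_def indicator_step by (simp add: sum.distrib)
  also have "(\<Sum>j\<in>{y..R}. crossing t (j - 1) - crossing t j) = crossing t (y - 1) - crossing t R"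
    using sum_telescope_int[of "crossing t" y m] R by simp
  also have "crossing t R = 0" using ones_right[of "R + 1" t] unfolding crossing_def by auto
  finally show ?thesis by simp
qed

(* The k-th one from the right, a particle starting at base k, either has reached its final
   window [R + 1 - k, R] or advances by one in each round. It cannot be blocked: a blocking one
   directly in front would be the (k-1)-th particle, which stays two positions ahead (gap). *)
lemma particle_advance:
  assumes k: "1 \<le> k" and parity: "even (base k + \<phi>)"
    and gap: "2 \<le> k \<Longrightarrow> base k + 2 \<le> base (k - 1)"
    and prev: "2 \<le> k \<Longrightarrow>
      int (k - 1) \<le> ones_in (b t) (min (R + 1 - int (k - 1)) (base (k - 1) + int t)) R"
    and cur: "int k \<le> ones_in (b t) (min (R + 1 - int k) (base k + int t)) R"
  shows "int k \<le> ones_in (b (Suc t)) (min (R + 1 - int k) (base k + int (Suc t))) R"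
proof (cases "R + 1 - int k \<le> base k + int t")
  case True
  then have "min (R + 1 - int k) (base k + int (Suc t)) = R + 1 - int k" by simp
  moreover have "R + 1 - int k \<le> R + 1" using k by simp
  ultimately show ?thesis
    using cur True ones_in_step[of "R + 1 - int k" t] crossing_nonneg[of t "R - int k"] by simp
next
  case False
  define x where "x = base k + int t"
  have x: "x + 1 \<le> R" "x < R + 1 - int k" using False k unfolding x_def by auto
  have target: "min (R + 1 - int k) (base k + int (Suc t)) = x + 1" using False x_def by auto
  have next_step: "ones_in (b (Suc t)) (x + 1) R = ones_in (b t) (x + 1) R + crossing t x"
    using ones_in_step[of "x + 1" t] x by simp
  show ?thesis
  proof (cases "int k \<le> ones_in (b t) (x + 1) R")
    case True then show ?thesis using target next_step crossing_nonneg[of t x] by simp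
  next
    case False
    have cur': "int k \<le> ones_in (b t) x R" using cur x unfolding x_def by simp
    have bx: "b t x" and rest: "ones_in (b t) (x + 1) R = int k - 1"
      using ones_in_split[of x R "b t"] cur' False x by (auto split: if_splits)
    have "\<not> b t (x + 1)"
    proof (rule zero_ahead[OF rest _ k])
      assume k2: "2 \<le> k"
      show "x + 2 \<le> min (R + 1 - int (k - 1)) (base (k - 1) + int t)"
        using gap[OF k2] x k2 unfolding x_def by auto
    qed (use x prev in auto)
    moreover have "even (x + int t + \<phi>)" using parity unfolding x_def by presburger
    ultimately have "crossing t x = 1" using bx eager unfolding crossing_def by simp
    then show ?thesis using target next_step rest by simp
  qed
qed

theorem particles_progress:
  assumes parity: "\<And>k. 1 \<le> k \<Longrightarrow> k \<le> K \<Longrightarrow> even (base k + \<phi>)"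
    and gap: "\<And>k. 2 \<le> k \<Longrightarrow> k \<le> K \<Longrightarrow> base k + 2 \<le> base (k - 1)"
    and init: "\<And>k. 1 \<le> k \<Longrightarrow> k \<le> K \<Longrightarrow> int k \<le> ones_in (b 0) (min (R + 1 - int k) (base k)) R"
  shows "1 \<le> k \<Longrightarrow> k \<le> K \<Longrightarrow> int k \<le> ones_in (b t) (min (R + 1 - int k) (base k + int t)) R"
proof (induction t arbitrary: k)
  case 0 then show ?case using init by simp
next
  case (Suc t)
  have "int (k - 1) \<le> ones_in (b t) (min (R + 1 - int (k - 1)) (base (k - 1) + int t)) R"
    if "2 \<le> k" using Suc.IH[of "k - 1"] Suc.prems that by simp
  then show ?case
    by (intro particle_advance) (use Suc parity gap in auto)
qed

end

(* A permutation of {1..n} that moves no element downwards is the identity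
   (compare the sums of the values). *)
lemma permutes_ge_id:
  fixes s :: "nat \<Rightarrow> nat"
  assumes perm: "s permutes {1..n}" and ge: "\<And>j. 1 \<le> j \<Longrightarrow> j \<le> n \<Longrightarrow> j \<le> s j"
  shows "s = id"
proof (rule ccontr)
  assume "s \<noteq> id"
  then obtain j where "s j \<noteq> j" by (auto simp: fun_eq_iff)
  then have j: "j \<in> {1..n}" using permutes_not_in[OF perm] by blast
  then have "j \<le> s j" using ge by simp
  with \<open>s j \<noteq> j\<close> have "j < s j" by linarith
  have "sum id {1..n} < sum s {1..n}"
    by (rule sum_strict_mono_ex1) (use ge j \<open>j < s j\<close> in auto)
  also have "sum s {1..n} = sum id (s ` {1..n})"
    by (simp add: sum.reindex permutes_inj_on[OF perm])
  also have "s ` {1..n} = {1..n}" using permutes_image[OF perm] .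
  finally show False by simp
qed

locale exchange_rounds =
  fixes n :: nat and active :: "nat \<Rightarrow> nat \<Rightarrow> bool" and p :: "nat \<Rightarrow> nat"
  assumes active_range: "\<And>t i. active t i \<Longrightarrow> 1 \<le> i \<and> i < n"
    and active_disjoint: "\<And>t i. active t i \<Longrightarrow> \<not> active t (Suc i)"
    and p_permutes: "p permutes {1..n}"
begin

primrec arr :: "nat \<Rightarrow> nat \<Rightarrow> nat" where
  "arr 0 = p"
| "arr (Suc t) = arr t \<circ> swap_adjacent (\<lambda>i. active t i \<and> arr t (Suc i) < arr t i)"

declare arr.simps(2)[simp del]

definition exch :: "nat \<Rightarrow> nat \<Rightarrow> bool" where
  "exch t i = (active t i \<and> arr t (Suc i) < arr t i)"

lemma arr_Suc: "arr (Suc t) = arr t \<circ> swap_adjacent (exch t)"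
  unfolding exch_def by (simp add: arr.simps(2))

lemma exch_disjoint: "exch t i \<Longrightarrow> \<not> exch t (Suc i)"
  unfolding exch_def using active_disjoint by blast

lemma exch_range: "exch t i \<Longrightarrow> 1 \<le> i \<and> i < n"
  unfolding exch_def using active_range by blast

lemma round_bandwidth_1: "has_bandwidth n 1 (swap_adjacent (exch t))"
  by (rule swap_adjacent_bandwidth_1) (use exch_disjoint exch_range in auto)

lemma round_involution: "swap_adjacent (exch t) \<circ> swap_adjacent (exch t) = id"
  using swap_adjacent_involution[of "exch t"] exch_disjoint exch_range by (auto simp: fun_eq_iff)

lemma arr_permutes: "arr t permutes {1..n}"
proof (induction t)
  case (Suc t)
  have "swap_adjacent (exch t) permutes {1..n}"
    using round_bandwidth_1 unfolding has_bandwidth_def by blast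
  then show ?case using Suc permutes_compose unfolding arr_Suc by blast
qed (use p_permutes in simp)

lemma arr_undo: "arr T \<circ> foldr (\<circ>) (rev (map (\<lambda>t. swap_adjacent (exch t)) [0..<T])) id = p"
proof (induction T)
  case (Suc T)
  let ?P = "foldr (\<circ>) (rev (map (\<lambda>t. swap_adjacent (exch t)) [0..<T])) id"
  have "arr (Suc T) \<circ> foldr (\<circ>) (rev (map (\<lambda>t. swap_adjacent (exch t)) [0..<Suc T])) id
      = arr T \<circ> (swap_adjacent (exch T) \<circ> swap_adjacent (exch T)) \<circ> ?P"
    by (simp add: arr_Suc o_assoc)
  also have "\<dots> = arr T \<circ> ?P" by (simp only: round_involution) simp
  also have "\<dots> = p" by (rule Suc.IH)
  finally show ?case .
qed simp

lemma sorted_imp_product: "arr T = id \<Longrightarrow> prod_bw1_atmost n T p"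
  unfolding prod_bw1_atmost_def
  by (rule exI[of _ "rev (map (\<lambda>t. swap_adjacent (exch t)) [0..<T])"])
    (use arr_undo[of T] round_bandwidth_1 in auto)

definition large :: "nat \<Rightarrow> nat \<Rightarrow> int \<Rightarrow> bool" where
  "large c t j = (1 \<le> j \<and> c < arr t (nat j))"

definition iexch :: "nat \<Rightarrow> int \<Rightarrow> bool" where
  "iexch t i = (1 \<le> i \<and> exch t (nat i))"

lemma iexch_disjoint: "iexch t i \<Longrightarrow> \<not> iexch t (i + 1)"
proof -
  assume a: "iexch t i"
  then have "nat (i + 1) = Suc (nat i)" unfolding iexch_def by (simp add: nat_add_distrib)
  then show ?thesis using a exch_disjoint[of t "nat i"] unfolding iexch_def by simp
qed

lemma large_no_left_move: "iexch t i \<Longrightarrow> large c t (i + 1) \<Longrightarrow> large c t i"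
  unfolding iexch_def large_def exch_def by (auto simp: nat_add_distrib)

lemma large_exchange:
  "large c (Suc t) j =
     (if iexch t (j - 1) then large c t (j - 1) else if iexch t j then large c t (j + 1) else large c t j)"
proof (cases "1 \<le> j")
  case True
  define m where "m = nat j"
  have j: "j = int m" "1 \<le> m" using True unfolding m_def by auto
  have left: "iexch t (j - 1) \<longleftrightarrow> 1 \<le> m - 1 \<and> exch t (m - 1)"
    using j unfolding iexch_def by (auto simp: nat_diff_distrib)
  have "1 \<le> m - 1" if "exch t (m - 1)" using exch_range[OF that] by simp
  then have left': "iexch t (j - 1) \<longleftrightarrow> exch t (m - 1)" using left by blast
  have here: "iexch t j \<longleftrightarrow> exch t m" using j unfolding iexch_def by simp
  have "nat (j - 1) = m - 1" "nat (j + 1) = Suc m" using j by auto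
  then show ?thesis using j left' here exch_range[of t "m - 1"]
    unfolding large_def arr_Suc swap_adjacent_def by auto
next
  case False
  then show ?thesis unfolding large_def iexch_def by auto
qed

lemma sorted_if_thresholds:
  assumes "\<And>c j. c < n \<Longrightarrow> c < j \<Longrightarrow> j \<le> n \<Longrightarrow> c < arr T j"
  shows "arr T = id"
proof (rule permutes_ge_id[OF arr_permutes])
  fix j :: nat assume "1 \<le> j" "j \<le> n"
  then have "j - 1 < arr T j" using assms[of "j - 1" j] by simp
  then show "j \<le> arr T j" using \<open>1 \<le> j\<close> by linarith
qed

end

lemma card_split_by:
  fixes f :: "'a \<Rightarrow> 'b::linorder"
  assumes "finite A"
  shows "card A = card {x \<in> A. f x \<le> c} + card {x \<in> A. c < f x}"
proof -
  have "card A = card ({x \<in> A. f x \<le> c} \<union> {x \<in> A. c < f x})" by (rule arg_cong[where f = card]) auto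
  also have "\<dots> = card {x \<in> A. f x \<le> c} + card {x \<in> A. c < f x}"
    by (rule card_Un_disjoint) (use assms in auto)
  finally show ?thesis .
qed

locale bandwidth_perm =
  fixes n w :: nat and p :: "nat \<Rightarrow> nat"
  assumes p_permutes: "p permutes {1..n}"
    and p_bandwidth: "\<And>i. i \<in> {1..n} \<Longrightarrow> \<bar>int (p i) - int i\<bar> \<le> int w"
    and w_pos: "1 \<le> w"
begin

lemma p_fixed: "i \<notin> {1..n} \<Longrightarrow> p i = i"
  using permutes_not_in[OF p_permutes] .

lemma p_up: "p i \<le> i + w"
  using p_bandwidth[of i] p_fixed[of i] by (cases "i \<in> {1..n}") auto

lemma p_down: "i \<le> p i + w"
  using p_bandwidth[of i] p_fixed[of i] by (cases "i \<in> {1..n}") auto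

lemma p_inj: "inj p"
  using permutes_inj[OF p_permutes] .

lemma p_in: "i \<in> {1..n} \<Longrightarrow> p i \<in> {1..n}"
  using permutes_in_image[OF p_permutes] by simp

lemma p_image_eq:
  assumes "p ` A \<subseteq> B" "finite B" "card B = card A"
  shows "p ` A = B"
  using card_subset_eq[OF assms(2,1)] card_image[OF inj_on_subset[OF p_inj]] assms(3) by simp

(* Plain odd-even transposition sort may need 2w rounds for such a block when c has the
   wrong parity, so the network below adapts its parity to the blocks. *)
definition full_block :: "nat \<Rightarrow> bool" where
  "full_block c = (c + w \<le> n \<and> (\<forall>j. c < j \<and> j \<le> c + w \<longrightarrow> p j \<le> c))"

lemma block_right_image:
  assumes b: "full_block b"
  shows "w \<le> b" and "p ` {b<..b+w} = {b-w<..b}"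
proof -
  have small: "p j \<le> b" and pos: "1 \<le> p j" if "j \<in> {b<..b+w}" for j
    using that b p_in[of j] unfolding full_block_def by auto
  have "card {b<..b+w} \<le> card {1..b}"
    by (rule card_inj_on_le[OF inj_on_subset[OF p_inj]]) (use small pos in auto)
  then show wb: "w \<le> b" by simp
  show "p ` {b<..b+w} = {b-w<..b}"
  proof (rule p_image_eq)
    show "p ` {b<..b+w} \<subseteq> {b-w<..b}"
    proof
      fix x assume "x \<in> p ` {b<..b+w}"
      then obtain j where "j \<in> {b<..b+w}" "x = p j" by auto
      then show "x \<in> {b-w<..b}" using small[of j] p_down[of j] wb by auto
    qed
  qed (use wb in simp_all)
qed

lemma block_left_image:
  assumes b: "full_block b"
  shows "p ` {1..b-w} = {1..b-w}"
proof (rule p_image_eq)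
  show "p ` {1..b-w} \<subseteq> {1..b-w}"
  proof
    fix x assume "x \<in> p ` {1..b-w}"
    then obtain j where j: "j \<in> {1..b-w}" "x = p j" by auto
    have "p j \<notin> p ` {b<..b+w}" using j by (auto simp: inj_image_mem_iff[OF p_inj])
    then show "x \<in> {1..b-w}"
      using j p_in[of j] p_up[of j] b block_right_image[OF b] unfolding full_block_def by auto
  qed
qed simp_all

lemma block_middle_image:
  assumes b: "full_block b"
  shows "p ` {b-w<..b} = {b<..b+w}"
proof (rule p_image_eq)
  show "p ` {b-w<..b} \<subseteq> {b<..b+w}"
  proof
    fix x assume "x \<in> p ` {b-w<..b}"
    then obtain j where j: "j \<in> {b-w<..b}" "x = p j" by auto
    have "p j \<notin> p ` {1..b-w}" "p j \<notin> p ` {b<..b+w}"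
      using j by (auto simp: inj_image_mem_iff[OF p_inj])
    then show "x \<in> {b<..b+w}"
      using j p_in[of j] p_up[of j] b block_right_image[OF b] block_left_image[OF b]
      unfolding full_block_def by auto
  qed
qed (use block_right_image[OF assms] in simp_all)

lemma blocks_apart:
  assumes "full_block b" "full_block b'" "b < b'"
  shows "b + 2 * w \<le> b'"
proof (rule ccontr)
  assume close: "\<not> b + 2 * w \<le> b'"
  define j where "j = max (b' - w + 1) (b + 1)"
  have "w \<le> b'" using block_right_image(1)[OF assms(2)] .
  then have "j \<in> {b<..b+w}" "j \<in> {b'-w<..b'}" using w_pos close assms(3) unfolding j_def by auto
  then have "p j \<le> b" "b' < p j"
    using block_right_image[OF assms(1)] block_middle_image[OF assms(2)] by auto
  then show False using assms(3) by simp
qed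

lemma block_unique:
  assumes "full_block b" "full_block b'" "b < i + w" "i < b + w" "b' < i + w" "i < b' + w"
  shows "b = b'"
  using blocks_apart[OF assms(1,2)] blocks_apart[OF assms(2,1)] assms(3-6)
  by (cases b b' rule: linorder_cases) auto

(* Inside the open window of a full block b the comparators follow the parity of b; the two
   comparators at the window boundaries (walls) are switched off. *)
definition phase :: "nat \<Rightarrow> nat" where
  "phase i = (if \<exists>b. full_block b \<and> b < i + w \<and> i < b + w \<and> odd b then 1 else 0)"

definition wall :: "nat \<Rightarrow> bool" where
  "wall i = (\<exists>b. full_block b \<and> (i + w = b \<or> i = b + w))"

definition active :: "nat \<Rightarrow> nat \<Rightarrow> bool" where
  "active t i = (1 \<le> i \<and> i < n \<and> even (i + t + phase i) \<and> \<not> wall i)"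

lemma phase_cong:
  assumes "\<And>b. full_block b \<Longrightarrow> (b < i + w \<and> i < b + w) = (b < j + w \<and> j < b + w)"
  shows "phase i = phase j"
  using assms unfolding phase_def by metis

lemma phase_block:
  assumes c: "full_block c"
  shows "phase c = (if odd c then 1 else 0)"
proof -
  have "(\<exists>b. full_block b \<and> b < c + w \<and> c < b + w \<and> odd b) = odd c"
  proof
    assume "\<exists>b. full_block b \<and> b < c + w \<and> c < b + w \<and> odd b"
    then obtain b where b: "full_block b" "b < c + w" "c < b + w" "odd b" by auto
    have "b = c" by (rule block_unique[OF b(1) c b(2,3)]) (use w_pos in auto)
    then show "odd c" using b by simp
  qed (use c w_pos in auto)
  then show ?thesis unfolding phase_def by simp
qed

(* Active comparators never overlap: two neighbouring non-walls have the same phase. *)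
lemma active_disjoint: "active t i \<Longrightarrow> \<not> active t (Suc i)"
proof
  assume a: "active t i" "active t (Suc i)"
  have "phase i = phase (Suc i)"
  proof (rule phase_cong)
    fix b assume "full_block b"
    then have "i + w \<noteq> b" "Suc i \<noteq> b + w" using a unfolding active_def wall_def by auto
    then show "(b < i + w \<and> i < b + w) = (b < Suc i + w \<and> Suc i < b + w)" by auto
  qed
  then show False using a unfolding active_def by auto
qed

sublocale exchange_rounds n active p
  by unfold_locales (use active_disjoint p_permutes in \<open>auto simp: active_def\<close>)

definition zone :: "nat \<Rightarrow> nat \<Rightarrow> nat" where
  "zone b x = (if x \<le> b - w then 0 else if x \<le> b + w then 1 else 2)"

lemma zone_mono: "x \<le> y \<Longrightarrow> zone b x \<le> zone b y"
  unfolding zone_def by auto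

lemma zone_initial:
  assumes b: "full_block b"
  shows "zone b (p j) = zone b j"
proof -
  have wb: "w \<le> b" using block_right_image(1)[OF b] .
  have left: "p ` {1..b-w} = {1..b-w}" using block_left_image[OF b] .
  have "p ` {b-w<..b+w} = p ` ({b-w<..b} \<union> {b<..b+w})" using wb by (simp add: ivl_disj_un)
  also have "\<dots> = {b-w<..b+w}"
    using block_middle_image[OF b] block_right_image(2)[OF b] wb by (auto simp: image_Un)
  finally have window: "p ` {b-w<..b+w} = {b-w<..b+w}" .
  consider "j = 0" | "j \<in> {1..b-w}" | "j \<in> {b-w<..b+w}" | "b + w < j" by force
  then show ?thesis
  proof cases
    case 1 then show ?thesis using p_fixed[of 0] by simp
  next
    case 2 then have "p j \<in> {1..b-w}" using left by blast
    then show ?thesis using 2 unfolding zone_def by auto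
  next
    case 3 then have "p j \<in> {b-w<..b+w}" using window by blast
    then show ?thesis using 3 unfolding zone_def by auto
  next
    case 4
    have "p j \<notin> p ` ({0} \<union> {1..b-w} \<union> {b-w<..b+w})"
      using 4 injD[OF p_inj, of j 0] by (auto simp: inj_image_mem_iff[OF p_inj])
    then have "b + w < p j" using left window p_fixed[of 0] by (auto simp: image_Un)
    then show ?thesis using 4 unfolding zone_def by auto
  qed
qed

lemma exch_not_wall: "exch t i \<Longrightarrow> \<not> wall i"
  unfolding exch_def active_def by auto

lemma zone_invariant:
  assumes b: "full_block b"
  shows "zone b (arr t j) = zone b j"
proof (induction t arbitrary: j)
  case 0 then show ?case using zone_initial[OF b] by simp
next
  case (Suc t)
  have "zone b (swap_adjacent (exch t) j) = zone b j"
  proof -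
    have no_wall: "i + w \<noteq> b" "i \<noteq> b + w" if "exch t i" for i
      using exch_not_wall[OF that] b unfolding wall_def by auto
    show ?thesis
      using no_wall[of "j - 1"] no_wall[of j] exch_range[of t "j - 1"] exch_range[of t j]
      unfolding swap_adjacent_def zone_def by auto
  qed
  then show ?case using Suc.IH unfolding arr_Suc by simp
qed

lemma descent_zones:
  assumes b: "full_block b" and down: "arr t (Suc i) \<le> c" "c < arr t i"
  shows "zone b (Suc i) = zone b i" "zone b c = zone b i" "zone b (arr t i) = zone b i"
proof -
  have "zone b (Suc i) \<le> zone b c" "zone b c \<le> zone b i"
    using zone_mono[OF down(1), of b] zone_mono[of c "arr t i" b] down(2)
      zone_invariant[OF b, of t i] zone_invariant[OF b, of t "Suc i"] by auto
  moreover have "zone b i \<le> zone b (Suc i)" by (rule zone_mono) simp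
  ultimately show "zone b (Suc i) = zone b i" "zone b c = zone b i" "zone b (arr t i) = zone b i"
    using zone_invariant[OF b, of t i] by auto
qed

lemma descent_not_wall:
  assumes down: "arr t (Suc i) \<le> c" "c < arr t i"
  shows "\<not> wall i"
proof
  assume "wall i"
  then obtain b where b: "full_block b" and at: "i + w = b \<or> i = b + w" unfolding wall_def by auto
  have "zone b (Suc i) \<noteq> zone b i" using at w_pos unfolding zone_def by auto
  then show False using descent_zones(1)[OF b down] by simp
qed

lemma descent_phase:
  assumes down: "arr t (Suc i) \<le> c" "c < arr t i"
  shows "phase i = phase c"
proof (rule phase_cong)
  fix b assume b: "full_block b"
  have wb: "w \<le> b" using block_right_image(1)[OF b] .
  have window: "(b < x + w \<and> x < b + w) \<longleftrightarrow> zone b x = 1 \<and> x \<noteq> b + w" for x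
    using wb unfolding zone_def by auto
  have at_edge: "zone b (b + w) = 1" using w_pos unfolding zone_def by auto
  have beyond: "zone b x = 2" if "b + w < x" for x using that unfolding zone_def by auto
  have "i \<noteq> b + w" using descent_zones(1)[OF b down] at_edge beyond[of "Suc i"] by auto
  moreover have "c \<noteq> b + w"
    using descent_zones(2,3)[OF b down] down(2) at_edge beyond[of "arr t i"] by auto
  ultimately show "(b < i + w \<and> i < b + w) = (b < c + w \<and> c < b + w)"
    using descent_zones(2)[OF b down] window by auto
qed

(* Hence a descent across c in a round of parity phase c is exchanged: the threshold view at c
   satisfies the eagerness condition of zero_one_trace with phi = phase c. *)
lemma descent_active:
  assumes c: "c < n" and i: "1 \<le> i" and down: "arr t (Suc i) \<le> c" "c < arr t i"
    and parity: "even (i + t + phase c)"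
  shows "active t i"
proof -
  have "Suc i \<le> n"
  proof (rule ccontr)
    assume "\<not> Suc i \<le> n"
    then have "arr t (Suc i) = Suc i" using permutes_not_in[OF arr_permutes] by simp
    then show False using down c \<open>\<not> Suc i \<le> n\<close> by simp
  qed
  then show ?thesis using i parity descent_not_wall[OF down] descent_phase[OF down]
    unfolding active_def by simp
qed

(* A value <= c sits at most
   w positions to the right of its place, so all c of them sit at positions <= c + w; and at most
   w - k of the positions 1..c-k hold a value > c (which is <= c-k+w), so at most w of the values
   <= c are left for the positions c+1-k..c+w. *)
lemma large_values_in_window:
  assumes c: "c < n" and k: "1 \<le> k" "k \<le> w"
  shows "k \<le> card {i. c + 1 - k \<le> i \<and> i \<le> c + w \<and> 1 \<le> i \<and> c < p i}"
proof -
  define I where "I = {i. c + 1 - k \<le> i \<and> i \<le> c + w \<and> 1 \<le> i}"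
  define low where "low = {1..c - k}"
  have fin: "finite I" "finite low" unfolding I_def low_def by (auto intro: bounded_nat_set_is_finite)
  have card_I: "card I = (if k \<le> c then w + k else c + w)"
  proof (cases "k \<le> c")
    case True
    then have "I = {c + 1 - k..c + w}" unfolding I_def by auto
    then show ?thesis using True by simp
  next
    case False
    then have "I = {1..c + w}" unfolding I_def by auto
    then show ?thesis using False by simp
  qed
  have "p i \<le> c - k + w" if "i \<in> low" for i using that p_up[of i] unfolding low_def by simp
  then have "card {i \<in> low. c < p i} \<le> card {c<..c - k + w}"
    by (intro card_inj_on_le[OF inj_on_subset[OF p_inj]]) auto
  then have low_large: "card {i \<in> low. c < p i} \<le> (c - k + w) - c" by simp
  have small_pos: "1 \<le> p i" if "1 \<le> i" "p i \<le> c" for i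
    using that c p_in[of i] p_fixed[of i] by (cases "i \<in> {1..n}") auto
  have "card ({i \<in> I. p i \<le> c} \<union> {i \<in> low. p i \<le> c}) \<le> card {1..c}"
    by (rule card_inj_on_le[OF inj_on_subset[OF p_inj]]) (use small_pos in \<open>auto simp: I_def low_def\<close>)
  moreover have "card ({i \<in> I. p i \<le> c} \<union> {i \<in> low. p i \<le> c})
      = card {i \<in> I. p i \<le> c} + card {i \<in> low. p i \<le> c}"
    by (rule card_Un_disjoint) (use fin in \<open>auto simp: I_def low_def\<close>)
  ultimately have small: "card {i \<in> I. p i \<le> c} + card {i \<in> low. p i \<le> c} \<le> c" by simp
  have "k \<le> card {i \<in> I. c < p i}"
    using card_split_by[OF fin(1), of p c] card_split_by[OF fin(2), of p c] card_I low_large small k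
    unfolding low_def by (cases "k \<le> c") auto
  also have "{i \<in> I. c < p i} = {i. c + 1 - k \<le> i \<and> i \<le> c + w \<and> 1 \<le> i \<and> c < p i}"
    unfolding I_def by auto
  finally show ?thesis .
qed

lemma threshold_trace:
  assumes c: "c < n"
  shows "zero_one_trace (large c) iexch (int c + int w) (int (phase c))"
proof unfold_locales
  show "iexch t i \<Longrightarrow> \<not> iexch t (i + 1)" for t i by (rule iexch_disjoint)
  show "large c (Suc t) j = (if iexch t (j - 1) then large c t (j - 1)
      else if iexch t j then large c t (j + 1) else large c t j)" for t j
    by (rule large_exchange)
  show "iexch t i \<Longrightarrow> large c t (i + 1) \<Longrightarrow> large c t i" for t i
    by (rule large_no_left_move)
  show "iexch t i"
    if parity: "even (i + int t + int (phase c))" and here: "large c t i"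
      and next_small: "\<not> large c t (i + 1)" for t i
  proof -
    define m where "m = nat i"
    have m: "i = int m" "1 \<le> m" using here unfolding large_def m_def by auto
    have down: "arr t (Suc m) \<le> c" "c < arr t m"
      using here next_small m unfolding large_def by (auto simp: nat_add_distrib)
    have "even (m + t + phase c)" using parity m(1) by (simp flip: of_nat_add)
    then have "active t m" by (rule descent_active[OF c m(2) down])
    then show "iexch t i" using down m unfolding iexch_def exch_def by simp
  qed
  show "large c 0 j" if "int c + int w < j" for j
    using that p_down[of "nat j"] unfolding large_def by simp
qed

(* Starting positions of the particles of the threshold view at c: spaced by 2 and of the right
   parity. If the parity of c is wrong, c is no full block and so the first particle already
   sits in {c+1..c+w}. *)
definition start :: "nat \<Rightarrow> nat \<Rightarrow> int" where
  "start c k = (if even (c + phase c) then int c + 2 - 2 * int k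
                else if k = 1 then int c + 1 else int c + 3 - 2 * int k)"

lemma start_parity: "even (start c k + int (phase c))"
proof -
  have "phase c \<le> 1" unfolding phase_def by simp
  then show ?thesis unfolding start_def by (cases "phase c") auto
qed

lemma initial_counts:
  assumes c: "c < n" and k: "1 \<le> k" "k \<le> w"
  shows "int k \<le> ones_in (large c 0) (min (int c + int w + 1 - int k) (start c k)) (int c + int w)"
proof (cases "\<not> even (c + phase c) \<and> k = 1")
  case True
  then have "\<not> full_block c" using phase_block by auto
  have "\<exists>j. c < j \<and> j \<le> c + w \<and> c < p j"
  proof (cases "c + w \<le> n")
    case True then show ?thesis using \<open>\<not> full_block c\<close> unfolding full_block_def by auto
  next
    case False then show ?thesis using p_fixed[of "c + w"] w_pos by (intro exI[of _ "c + w"]) auto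
  qed
  then obtain j where j: "c < j" "j \<le> c + w" "c < p j" by blast
  have "1 \<le> ones_in (large c 0) (int c + 1) (int c + int w)"
    by (rule ones_in_pos[of _ "int j"]) (use j in \<open>auto simp: large_def\<close>)
  moreover have "min (int c + int w + 1 - int k) (start c k) = int c + 1"
    using True w_pos unfolding start_def by auto
  ultimately show ?thesis using True by simp
next
  case False
  then have "min (int c + int w + 1 - int k) (start c k) \<le> int c + 1 - int k"
    unfolding start_def using k by auto
  then have "ones_in (large c 0) (int c + 1 - int k) (int c + int w)
      \<le> ones_in (large c 0) (min (int c + int w + 1 - int k) (start c k)) (int c + int w)"
    by (rule ones_in_antimono)
  moreover have "int k \<le> ones_in (large c 0) (int c + 1 - int k) (int c + int w)"
  proof -
    define S where "S = {i. c + 1 - k \<le> i \<and> i \<le> c + w \<and> 1 \<le> i \<and> c < p i}"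
    have "ones_in (large c 0) (int c + 1 - int k) (int c + int w)
        = int (card ({int c + 1 - int k..int c + int w} \<inter> {j. large c 0 j}))"
      unfolding ones_in_def by (simp add: sum.If_cases)
    moreover have "card (int ` S) \<le> card ({int c + 1 - int k..int c + int w} \<inter> {j. large c 0 j})"
      by (rule card_mono) (auto simp: S_def large_def)
    moreover have "card (int ` S) = card S" by (simp add: card_image)
    moreover have "k \<le> card S" using large_values_in_window[OF c k] unfolding S_def .
    ultimately show ?thesis by linarith
  qed
  ultimately show ?thesis by simp
qed

(* Upper bound: 2w - 1 rounds sort p. The w-th particle of every threshold view reaches its
   final window by round 2w - 1. *)
theorem sorted_after_2w_minus_1: "arr (2 * w - 1) = id"
proof (rule sorted_if_thresholds)
  fix c j assume c: "c < n" and j: "c < j" "j \<le> n"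
  interpret trace: zero_one_trace "large c" iexch "int c + int w" "int (phase c)"
    by (rule threshold_trace[OF c])
  have "int w \<le> ones_in (large c (2 * w - 1))
      (min (int c + int w + 1 - int w) (start c w + int (2 * w - 1))) (int c + int w)"
  proof (rule trace.particles_progress[where K = w and base = "start c"])
    show "start c k + 2 \<le> start c (k - 1)" if "2 \<le> k" "k \<le> w" for k
      using that unfolding start_def by auto
  qed (use initial_counts[OF c] start_parity w_pos in auto)
  moreover have "int c + 1 \<le> start c w + int (2 * w - 1)" unfolding start_def using w_pos by auto
  ultimately have full: "int w \<le> ones_in (large c (2 * w - 1)) (int c + int w + 1 - int w) (int c + int w)"
    by simp
  have "large c (2 * w - 1) (int j)"
  proof (cases "j \<le> c + w")
    case True
    show ?thesis by (rule ones_in_full[OF full]) (use True j in auto)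
  next
    case False
    then show ?thesis by (intro trace.ones_right) simp
  qed
  then show "c < arr (2 * w - 1) j" unfolding large_def by simp
qed

end

lemma foldr_comp_id: "foldr (\<circ>) xs g = foldr (\<circ>) xs id \<circ> g"
  by (induction xs) (auto simp: o_assoc)

lemma foldr_comp_Cons: "foldr (\<circ>) (q # qs) id = q \<circ> foldr (\<circ>) qs id"
  by (simp add: fun_eq_iff)

lemma bandwidth_displacement: "has_bandwidth n w q \<Longrightarrow> \<bar>int (q i) - int i\<bar> \<le> int w"
  unfolding has_bandwidth_def by (cases "i \<in> {1..n}") (auto simp: permutes_not_in)

lemma product_displacement:
  assumes "\<forall>q\<in>set qs. has_bandwidth n 1 q"
  shows "\<bar>int (foldr (\<circ>) qs id i) - int i\<bar> \<le> int (length qs)"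
  using assms
proof (induction qs)
  case (Cons q qs)
  have "\<bar>int (q (foldr (\<circ>) qs id i)) - int (foldr (\<circ>) qs id i)\<bar> \<le> 1"
    using bandwidth_displacement[of n 1 q] Cons.prems by auto
  moreover have "\<bar>int (foldr (\<circ>) qs id i) - int i\<bar> \<le> int (length qs)"
    by (rule Cons.IH) (use Cons.prems in simp)
  ultimately show ?case unfolding foldr_comp_Cons by simp
qed simp

lemma product_permutes:
  assumes "\<forall>q\<in>set qs. has_bandwidth n 1 q"
  shows "foldr (\<circ>) qs id permutes {1..n}"
  using assms
proof (induction qs)
  case (Cons q qs)
  have "q permutes {1..n}" using Cons.prems unfolding has_bandwidth_def by simp
  moreover have "foldr (\<circ>) qs id permutes {1..n}" by (rule Cons.IH) (use Cons.prems in simp)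
  ultimately show ?case unfolding foldr_comp_Cons by (rule permutes_compose[rotated])
qed (simp add: permutes_id[unfolded id_def])

lemma card_no_two_consecutive:
  fixes C :: "int set"
  assumes "finite C" "C \<subseteq> {lo..hi}" "\<And>c. c \<in> C \<Longrightarrow> c + 1 \<notin> C" "lo \<le> hi + 2"
  shows "2 * int (card C) \<le> hi - lo + 2"
proof -
  let ?D = "(\<lambda>c. c + 1) ` C"
  have "card ?D = card C" by (rule card_image) (auto simp: inj_on_def)
  moreover have "C \<inter> ?D = {}" using assms(3) by auto
  moreover have "card (C \<union> ?D) \<le> card {lo..hi + 1}" by (rule card_mono) (use assms(2) in auto)
  ultimately have "card C + card C \<le> card {lo..hi + 1}" using assms(1) card_Un_disjoint[of C ?D] by simp
  then show ?thesis using assms(4) by simp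
qed

lemma sigma_w_involution: "sigma_w w (sigma_w w i) = i"
  unfolding sigma_w_def by auto

lemma sigma_w_bandwidth:
  assumes n: "2 * w \<le> n"
  shows "has_bandwidth n w (sigma_w w)"
proof -
  have "sigma_w w permutes {1..n}"
  proof (rule inj_imp_permutes)
    show "inj_on (sigma_w w) {1..n}" by (metis inj_onI sigma_w_involution)
    show "sigma_w w x \<in> {1..n}" if "x \<in> {1..n}" for x using that n unfolding sigma_w_def by auto
    show "sigma_w w x = x" if "x \<notin> {1..n}" for x using that n unfolding sigma_w_def by auto
  qed simp
  moreover have "\<bar>int (sigma_w w i) - int i\<bar> \<le> int w" for i unfolding sigma_w_def by auto
  ultimately show ?thesis unfolding has_bandwidth_def by auto
qed

lemma sigma_w_small_value: "sigma_w w x = v \<Longrightarrow> 1 \<le> v \<Longrightarrow> v \<le> w \<Longrightarrow> x = w + v"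
  unfolding sigma_w_def by (auto split: if_splits)

lemma sigma_w_large_value: "sigma_w w x = v \<Longrightarrow> w < v \<Longrightarrow> v \<le> 2 * w \<Longrightarrow> x + w = v"
  unfolding sigma_w_def by (auto split: if_splits)

locale bw1_factorisation =
  fixes n w :: nat and ps :: "(nat \<Rightarrow> nat) list"
  assumes w_pos: "1 \<le> w" and n_large: "2 * w \<le> n"
    and factors_bw1: "\<forall>q\<in>set ps. has_bandwidth n 1 q"
    and factorisation: "sigma_w w = foldr (\<circ>) ps id"
begin

definition prefix :: "nat \<Rightarrow> nat \<Rightarrow> nat" where "prefix t = foldr (\<circ>) (take t ps) id"
definition suffix :: "nat \<Rightarrow> nat \<Rightarrow> nat" where "suffix t = foldr (\<circ>) (drop t ps) id"

lemma sigma_split: "sigma_w w = prefix t \<circ> suffix t"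
  using foldr_comp_id[of "take t ps" "suffix t"] factorisation
  unfolding prefix_def suffix_def by (simp flip: foldr_append)

lemma prefix_Suc: "t < length ps \<Longrightarrow> prefix (Suc t) i = prefix t ((ps ! t) i)"
  using foldr_comp_id[of "take t ps" "ps ! t"]
  unfolding prefix_def by (simp add: take_Suc_conv_app_nth)

lemma prefix_displacement: "\<bar>int (prefix t i) - int i\<bar> \<le> int t"
proof -
  have "\<bar>int (prefix t i) - int i\<bar> \<le> int (length (take t ps))"
    unfolding prefix_def by (rule product_displacement) (use factors_bw1 in \<open>auto dest: in_set_takeD\<close>)
  then show ?thesis by (simp add: min_def split: if_splits)
qed

lemma suffix_displacement: "\<bar>int (suffix t i) - int i\<bar> \<le> int (length ps - t)"
proof -
  have "\<bar>int (suffix t i) - int i\<bar> \<le> int (length (drop t ps))"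
    unfolding suffix_def by (rule product_displacement) (use factors_bw1 in \<open>auto dest: in_set_dropD\<close>)
  then show ?thesis by simp
qed

lemma prefix_permutes: "prefix t permutes {1..n}"
  unfolding prefix_def by (rule product_permutes) (use factors_bw1 in \<open>auto dest: in_set_takeD\<close>)

lemma suffix_permutes: "suffix t permutes {1..n}"
  unfolding suffix_def by (rule product_permutes) (use factors_bw1 in \<open>auto dest: in_set_dropD\<close>)

definition inverted :: "nat \<Rightarrow> (nat \<times> nat) set" where
  "inverted t = {(i, j). i \<in> {1..n} \<and> j \<in> {1..n} \<and> j < i \<and>
     prefix t i \<le> w \<and> w < prefix t j \<and> prefix t j \<le> 2 * w}"

lemma inverted_finite: "finite (inverted t)"
  by (rule finite_subset[of _ "{1..n} \<times> {1..n}"]) (auto simp: inverted_def)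

lemma inverted_start: "card (inverted 0) = 0"
proof -
  have "prefix 0 = id" unfolding prefix_def by simp
  then have "inverted 0 = {}" unfolding inverted_def by auto
  then show ?thesis by simp
qed

lemma inverted_end: "card (inverted (length ps)) = w * w"
proof -
  have "prefix (length ps) = sigma_w w" unfolding prefix_def using factorisation by simp
  then have "inverted (length ps) = {w<..2*w} \<times> {1..w}"
    unfolding inverted_def using n_large by (auto simp: sigma_w_def split: if_splits)
  then show ?thesis by simp
qed

(* The transpositions (c, c+1) of factor t that exchange a value of {1..w} with one of
   {w+1..2w}: only these create new inversions. *)
definition straddling_swaps :: "nat \<Rightarrow> nat set" where
  "straddling_swaps t = {c \<in> {1..n}. (ps ! t) c = Suc c \<and> (ps ! t) (Suc c) = c \<and>
     prefix t c \<le> w \<and> w < prefix t (Suc c) \<and> prefix t (Suc c) \<le> 2 * w}"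

lemma inverted_step:
  assumes t: "t < length ps"
  shows "card (inverted (Suc t)) \<le> card (inverted t) + card (straddling_swaps t)"
proof -
  define q where "q = ps ! t"
  have q_bw: "has_bandwidth n 1 q" unfolding q_def using factors_bw1 t by simp
  have q_perm: "q permutes {1..n}" using q_bw unfolding has_bandwidth_def by simp
  have q_inj: "inj q" using permutes_inj[OF q_perm] .
  have q_move: "\<bar>int (q i) - int i\<bar> \<le> 1" for i using bandwidth_displacement[OF q_bw] by simp
  have prefix_q: "prefix (Suc t) i = prefix t (q i)" for i unfolding q_def using prefix_Suc[OF t] .
  define kept where "kept = {(i, j) \<in> inverted (Suc t). q j < q i}"
  define flipped where "flipped = {(i, j) \<in> inverted (Suc t). \<not> q j < q i}"
  have "card kept \<le> card (inverted t)"
  proof (rule card_inj_on_le[of "\<lambda>(i, j). (q i, q j)"])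
    show "inj_on (\<lambda>(i, j). (q i, q j)) kept" using q_inj by (auto simp: inj_on_def inj_def)
    show "(\<lambda>(i, j). (q i, q j)) ` kept \<subseteq> inverted t"
    proof
      fix x assume "x \<in> (\<lambda>(i, j). (q i, q j)) ` kept"
      then obtain i j where ij: "(i, j) \<in> kept" "x = (q i, q j)" by auto
      then have "q i \<in> {1..n}" "q j \<in> {1..n}"
        using permutes_in_image[OF q_perm] unfolding kept_def inverted_def by auto
      then show "x \<in> inverted t" using ij unfolding kept_def inverted_def prefix_q by auto
    qed
  qed (rule inverted_finite)
  moreover have "card flipped \<le> card (straddling_swaps t)"
  proof (rule card_inj_on_le[of snd])
    have swap: "i = Suc j \<and> q i = j \<and> q j = Suc j" if "(i, j) \<in> flipped" for i j
    proof -
      have ij: "j < i" "\<not> q j < q i" using that unfolding flipped_def inverted_def by auto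
      have "q i \<noteq> q j" using ij(1) q_inj by (metis injD less_irrefl)
      then show ?thesis using ij q_move[of i] q_move[of j] by arith
    qed
    show "inj_on snd flipped"
    proof (rule inj_onI)
      fix x y assume "x \<in> flipped" "y \<in> flipped" "snd x = snd y"
      then show "x = y" using swap[of "fst x" "snd x"] swap[of "fst y" "snd y"] by (cases x, cases y) auto
    qed
    show "snd ` flipped \<subseteq> straddling_swaps t"
    proof
      fix x assume "x \<in> snd ` flipped"
      then obtain i j where ij: "(i, j) \<in> flipped" "x = j" by force
      then show "x \<in> straddling_swaps t" using swap[OF ij(1)]
        unfolding flipped_def inverted_def straddling_swaps_def prefix_q q_def[symmetric] by auto
    qed
  qed (simp add: straddling_swaps_def)
  moreover have "card (inverted (Suc t)) \<le> card kept + card flipped"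
  proof -
    have "inverted (Suc t) = kept \<union> flipped" unfolding kept_def flipped_def by auto
    then show ?thesis by (simp add: card_Un_le)
  qed
  ultimately show ?thesis by simp
qed

(* A straddling swap at c needs c within t of the block boundary w (the prefix moved the values
   there) and within L - t of it (the suffix must still move them to their target). *)
lemma straddling_swap_range:
  assumes c: "c \<in> straddling_swaps t"
  shows "int w - int t \<le> int c" "int c \<le> int w + int t"
    "int w + 1 - int (length ps - t) \<le> int c" "int c \<le> int w + int (length ps - t) - 1"
proof -
  have c': "c \<in> {1..n}" "prefix t c \<le> w" "w < prefix t (Suc c)" "prefix t (Suc c) \<le> 2 * w"
    using c unfolding straddling_swaps_def by auto
  have pos: "1 \<le> prefix t c" using permutes_in_image[OF prefix_permutes[of t], of c] c' by simp
  obtain x where x: "suffix t x = c" using permutes_surj[OF suffix_permutes[of t]] by (metis surjD)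
  obtain y where y: "suffix t y = Suc c" using permutes_surj[OF suffix_permutes[of t]] by (metis surjD)
  have "sigma_w w x = prefix t c" using sigma_split[of t] x by (simp add: fun_eq_iff)
  then have x_val: "x = w + prefix t c" using sigma_w_small_value pos c'(2) by blast
  have "sigma_w w y = prefix t (Suc c)" using sigma_split[of t] y by (simp add: fun_eq_iff)
  then have y_val: "y + w = prefix t (Suc c)" using sigma_w_large_value c'(3,4) by blast
  have x_int: "int x = int w + int (prefix t c)" and y_int: "int y + int w = int (prefix t (Suc c))"
    using x_val y_val by simp_all
  have "int c \<le> int (prefix t c) + int t" "int (prefix t (Suc c)) \<le> int c + 1 + int t"
    using prefix_displacement[of t c] prefix_displacement[of t "Suc c"] unfolding abs_le_iff by simp_all
  moreover have "int x \<le> int c + int (length ps - t)" "int c + 1 \<le> int y + int (length ps - t)"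
    using suffix_displacement[of t x] suffix_displacement[of t y] x y unfolding abs_le_iff by simp_all
  ultimately show "int w - int t \<le> int c" "int c \<le> int w + int t"
    "int w + 1 - int (length ps - t) \<le> int c" "int c \<le> int w + int (length ps - t) - 1"
    using x_int y_int c'(2-4) pos by linarith+
qed

lemma straddling_swaps_sparse: "c \<in> straddling_swaps t \<Longrightarrow> Suc c \<notin> straddling_swaps t"
  unfolding straddling_swaps_def by auto

lemma straddling_swaps_bound:
  assumes t: "t < length ps"
  shows "card (straddling_swaps t) \<le> min (t + 1) (length ps - t)"
proof -
  let ?C = "int ` straddling_swaps t"
  have fin: "finite ?C" unfolding straddling_swaps_def by simp
  have card: "card ?C = card (straddling_swaps t)" by (simp add: card_image)
  have sparse: "c + 1 \<notin> ?C" if c_in: "c \<in> ?C" for c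
  proof
    assume "c + 1 \<in> ?C"
    then obtain x y where "x \<in> straddling_swaps t" "y \<in> straddling_swaps t" "c = int x" "c + 1 = int y"
      using c_in by blast
    moreover from this have "y = Suc x" by simp
    ultimately show False using straddling_swaps_sparse by blast
  qed
  have "2 * int (card ?C) \<le> (int w + int t) - (int w - int t) + 2"
    by (rule card_no_two_consecutive[OF fin _ sparse]) (use straddling_swap_range in auto)
  moreover have "2 * int (card ?C)
      \<le> (int w + int (length ps - t) - 1) - (int w + 1 - int (length ps - t)) + 2"
    by (rule card_no_two_consecutive[OF fin _ sparse])
      (use straddling_swap_range[of _ t] t in \<open>auto simp del: of_nat_diff\<close>)
  ultimately show ?thesis using card by simp
qed

lemma inverted_growth:
  "t < length ps \<Longrightarrow> card (inverted (Suc t)) \<le> card (inverted t) + min (t + 1) (length ps - t)"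
  using inverted_step straddling_swaps_bound by fastforce

(* Summing the growth bounds from both ends. *)
lemma inverted_forward: "t \<le> length ps \<Longrightarrow> 2 * card (inverted t) \<le> t * (t + 1)"
proof (induction t)
  case (Suc t)
  then show ?case using inverted_growth[of t] by (simp add: algebra_simps)
qed (simp add: inverted_start)

lemma inverted_backward:
  "t \<le> length ps \<Longrightarrow>
     2 * card (inverted (length ps)) \<le> 2 * card (inverted t) + (length ps - t) * (length ps - t + 1)"
proof (induction t rule: inc_induct)
  case (step t)
  have "card (inverted (Suc t)) \<le> card (inverted t) + (length ps - t)"
    using inverted_growth[OF step.hyps(2)] by simp
  moreover have "length ps - t = Suc (length ps - Suc t)" using step.hyps(2) by simp
  ultimately show ?case using step.IH by (simp add: algebra_simps)
qed simp

(* Lower bound: with L <= 2w - 2 factors at most w(w-1) < w^2 inversions could arise. *)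
theorem length_lower_bound: "2 * w - 1 \<le> length ps"
proof (rule ccontr)
  assume "\<not> 2 * w - 1 \<le> length ps"
  then have short: "length ps + 2 \<le> 2 * w" by simp
  have "(w - 1) * w < w * w" using w_pos by simp
  show False
  proof (cases "length ps < w")
    case True
    have "2 * card (inverted (length ps)) \<le> length ps * (length ps + 1)"
      using inverted_forward by simp
    also have "\<dots> \<le> (w - 1) * w" by (rule mult_mono) (use True in auto)
    finally show False using inverted_end \<open>(w - 1) * w < w * w\<close> by simp
  next
    case False
    then have mid: "w - 1 \<le> length ps" by simp
    have "2 * card (inverted (length ps))
        \<le> 2 * card (inverted (w - 1)) + (length ps - (w - 1)) * (length ps - (w - 1) + 1)"
      by (rule inverted_backward[OF mid])
    moreover have "2 * card (inverted (w - 1)) \<le> (w - 1) * w"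
      using inverted_forward[OF mid] w_pos by simp
    moreover have "(length ps - (w - 1)) * (length ps - (w - 1) + 1) \<le> (w - 1) * w"
      by (rule mult_mono) (use short w_pos in auto)
    ultimately show False using inverted_end \<open>(w - 1) * w < w * w\<close> by linarith
  qed
qed

end

theorem corollary1p2:
  fixes w :: nat
  assumes "w \<ge> 1"
  shows "(\<forall>n p. has_bandwidth n w p \<longrightarrow> prod_bw1_atmost n (2 * w - 1) p)
       \<and> (\<forall>n. n \<ge> 2 * w \<longrightarrow>
            has_bandwidth n w (sigma_w w) \<and>
            \<not> (\<exists>k < 2 * w - 1. prod_bw1_atmost n k (sigma_w w)))"
proof (intro conjI allI impI)
  fix n p assume "has_bandwidth n w p"
  then interpret bandwidth_perm n w p
    using assms by unfold_locales (auto simp: has_bandwidth_def)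
  show "prod_bw1_atmost n (2 * w - 1) p"
    by (rule sorted_imp_product[OF sorted_after_2w_minus_1])
next
  fix n assume n: "2 * w \<le> n"
  show "has_bandwidth n w (sigma_w w)" by (rule sigma_w_bandwidth[OF n])
  show "\<not> (\<exists>k < 2 * w - 1. prod_bw1_atmost n k (sigma_w w))"
  proof
    assume "\<exists>k < 2 * w - 1. prod_bw1_atmost n k (sigma_w w)"
    then obtain k ps where k: "k < 2 * w - 1" "length ps \<le> k"
      and "\<forall>q\<in>set ps. has_bandwidth n 1 q" "sigma_w w = foldr (\<circ>) ps id"
      unfolding prod_bw1_atmost_def by blast
    then interpret bw1_factorisation n w ps
      using assms n by unfold_locales auto
    show False using length_lower_bound k by simp
  qed
qed

end
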